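(* Fix $M>0$. Then $$\alpha(M):=\inf_{T,u,v}\ \mathbb{P}\big(\tau_{u,+}^{X^{(T_{u,v},u)}}=\infty\big)>0,$$ where the infimum is over all trees $T$ which are $M$-bounded subdivisions of a tree with minimum degree at least $3$, and over all pairs of adjacent vertices $u\sim v$ in $T$.
   Context: A subdivision of a graph replaces each edge by a path of finite length; it is $M$-bounded if each such path has length at most $M$. For adjacent vertices $u\sim v$ of a tree $T$, $T_{u,v}$ is the connected component of $u$ in $T$ after removing $v$. $X^{(G,u)}$ denotes simple random walk on the (unweighted, undirected) graph $G$ started at $u$, and $\tau^{X^{(G,u)}}_{u,+}$ is its first return time to $u$ (first time $t\ge1$ at which it is at $u$). *)

theory Defs
  imports Complex_Main
begin

definition graph :: "'a set \<Rightarrow> ('a \<Rightarrow> 'a \<Rightarrow> bool) \<Rightarrow> bool" where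
  "graph V E \<longleftrightarrow> (\<forall>x y. E x y \<longrightarrow> x \<in> V \<and> y \<in> V \<and> E y x \<and> x \<noteq> y)"

definition connected_graph :: "'a set \<Rightarrow> ('a \<Rightarrow> 'a \<Rightarrow> bool) \<Rightarrow> bool" where
  "connected_graph V E \<longleftrightarrow> (\<forall>x\<in>V. \<forall>y\<in>V. E\<^sup>*\<^sup>* x y)"

definition has_cycle :: "'a set \<Rightarrow> ('a \<Rightarrow> 'a \<Rightarrow> bool) \<Rightarrow> bool" where
  "has_cycle V E \<longleftrightarrow> (\<exists>xs. 3 \<le> length xs \<and> distinct xs \<and> set xs \<subseteq> V \<and>
      (\<forall>i. Suc i < length xs \<longrightarrow> E (xs ! i) (xs ! Suc i)) \<and> E (last xs) (hd xs))"

definition is_tree :: "'a set \<Rightarrow> ('a \<Rightarrow> 'a \<Rightarrow> bool) \<Rightarrow> bool" where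
  "is_tree V E \<longleftrightarrow> graph V E \<and> V \<noteq> {} \<and> connected_graph V E \<and> \<not> has_cycle V E"

definition locally_finite :: "'a set \<Rightarrow> ('a \<Rightarrow> 'a \<Rightarrow> bool) \<Rightarrow> bool" where
  "locally_finite V E \<longleftrightarrow> (\<forall>x\<in>V. finite {y. E x y})"

definition min_degree_ge3 :: "'a set \<Rightarrow> ('a \<Rightarrow> 'a \<Rightarrow> bool) \<Rightarrow> bool" where
  "min_degree_ge3 V E \<longleftrightarrow> (\<forall>x\<in>V. infinite {y. E x y} \<or> 3 \<le> card {y. E x y})"

text \<open>(VT,ET) is an M-bounded subdivision of (VS,ES): up to the identification \<phi> of
the vertices of S with the branch vertices of T, each edge {a,b} of S is replaced by a
path p a b from \<phi> a to \<phi> b of length (number of edges) between 1 and M, internally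
disjoint from the branch vertices and from the other paths, and T consists exactly of
these paths.\<close>
definition bounded_subdivision ::
  "real \<Rightarrow> 'a set \<Rightarrow> ('a \<Rightarrow> 'a \<Rightarrow> bool) \<Rightarrow> 'b set \<Rightarrow> ('b \<Rightarrow> 'b \<Rightarrow> bool) \<Rightarrow> bool" where
  "bounded_subdivision M VT ET VS ES \<longleftrightarrow>
    (\<exists>(\<phi>::'b \<Rightarrow> 'a) (p::'b \<Rightarrow> 'b \<Rightarrow> 'a list).
      inj_on \<phi> VS \<and> \<phi> ` VS \<subseteq> VT \<and>
      (\<forall>a b. ES a b \<longrightarrow>
         2 \<le> length (p a b) \<and> real (length (p a b) - 1) \<le> M \<and>
         hd (p a b) = \<phi> a \<and> last (p a b) = \<phi> b \<and> distinct (p a b) \<and>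
         p b a = rev (p a b) \<and> set (p a b) \<subseteq> VT \<and>
         (\<forall>i. Suc i < length (p a b) \<longrightarrow> ET (p a b ! i) (p a b ! Suc i)) \<and>
         set (p a b) \<inter> \<phi> ` VS = {\<phi> a, \<phi> b}) \<and>
      (\<forall>a b c d. ES a b \<and> ES c d \<and> {a, b} \<noteq> {c, d} \<longrightarrow>
         set (p a b) \<inter> set (p c d) \<subseteq> \<phi> ` VS) \<and>
      VT = \<phi> ` VS \<union> \<Union> {set (p a b) | a b. ES a b} \<and>
      (\<forall>x y. ET x y \<longleftrightarrow>
         (\<exists>a b i. ES a b \<and> Suc i < length (p a b) \<and> x = p a b ! i \<and> y = p a b ! Suc i)))"

text \<open>T_{u,v}: the component of u in T after removing v, as an induced subgraph.\<close>
definition branch_vertices :: "'a set \<Rightarrow> ('a \<Rightarrow> 'a \<Rightarrow> bool) \<Rightarrow> 'a \<Rightarrow> 'a \<Rightarrow> 'a set" where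
  "branch_vertices V E u v = {w \<in> V - {v}. (\<lambda>x y. E x y \<and> x \<noteq> v \<and> y \<noteq> v)\<^sup>*\<^sup>* u w}"

definition branch_edges :: "'a set \<Rightarrow> ('a \<Rightarrow> 'a \<Rightarrow> bool) \<Rightarrow> 'a \<Rightarrow> 'a \<Rightarrow> 'a \<Rightarrow> 'a \<Rightarrow> bool" where
  "branch_edges V E u v x y \<longleftrightarrow>
     E x y \<and> x \<in> branch_vertices V E u v \<and> y \<in> branch_vertices V E u v"

text \<open>The law of
(X_0,...,X_n) for the walk started at u gives the path xs (with xs!0 = u and consecutive
entries adjacent) probability prod_{i<n} 1/deg(xs!i).\<close>
definition degree :: "('a \<Rightarrow> 'a \<Rightarrow> bool) \<Rightarrow> 'a \<Rightarrow> nat" where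
  "degree E x = card {y. E x y}"

definition walk_weight :: "('a \<Rightarrow> 'a \<Rightarrow> bool) \<Rightarrow> 'a list \<Rightarrow> real" where
  "walk_weight E xs = (\<Prod>i < length xs - 1. 1 / real (degree E (xs ! i)))"

text \<open>Walks (X_0,...,X_n) with X_0 = u and X_t \<noteq> u for 1 \<le> t \<le> n, i.e. the event
{tau_{u,+} > n}.\<close>
definition avoiding_walks :: "('a \<Rightarrow> 'a \<Rightarrow> bool) \<Rightarrow> 'a \<Rightarrow> nat \<Rightarrow> 'a list set" where
  "avoiding_walks E u n = {xs. length xs = Suc n \<and> xs ! 0 = u \<and>
      (\<forall>i<n. E (xs ! i) (xs ! Suc i)) \<and> (\<forall>i. 1 \<le> i \<and> i \<le> n \<longrightarrow> xs ! i \<noteq> u)}"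

definition prob_no_return_by :: "('a \<Rightarrow> 'a \<Rightarrow> bool) \<Rightarrow> 'a \<Rightarrow> nat \<Rightarrow> real" where
  "prob_no_return_by E u n = (\<Sum>xs \<in> avoiding_walks E u n. walk_weight E xs)"

text \<open>P(tau_{u,+} = \<infinity>) = lim_n P(tau_{u,+} > n) = inf_n P(tau_{u,+} > n)
(continuity from above; the sequence is non-increasing).\<close>
definition escape_prob :: "('a \<Rightarrow> 'a \<Rightarrow> bool) \<Rightarrow> 'a \<Rightarrow> real" where
  "escape_prob E u = (INF n. prob_no_return_by E u n)"

end

theory Submission
  imports Defs "HOL-Library.Transitive_Closure_Table"
begin

(* Root the branch T_{u,v} at u and consider the potential h with h(u) = 0 that increases by
   a slope s along every edge pointing away from u, where s starts at 1/(2M) and is halved after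
   every branch vertex.  An interior vertex of a subdivision path has one parent and one child,
   a branch vertex has one parent and at least two children, so h is subharmonic off u: the
   children gain s while the parent loses at most (number of children) * s.  Between branch
   vertices there are at most M steps, so along any ray h grows by at most
   M * (1 + 1/2 + 1/4 + ...) / (2M) = 1.  A subharmonic function bounded by 1 bounds from below
   the probability of avoiding u for n steps, and at u (where all neighbours carry the value
   1/(2M)) this gives P(tau_u^+ = infinity) >= 1/(2M), uniformly in T, u and v. *)

section \<open>Walks avoiding a vertex\<close>

definition avoiding_walks_from :: "('a \<Rightarrow> 'a \<Rightarrow> bool) \<Rightarrow> 'a \<Rightarrow> 'a \<Rightarrow> nat \<Rightarrow> 'a list set" where
  "avoiding_walks_from E u x n = {xs. length xs = Suc n \<and> xs ! 0 = x \<and>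
      (\<forall>i<n. E (xs ! i) (xs ! Suc i)) \<and> (\<forall>i. 1 \<le> i \<and> i \<le> n \<longrightarrow> xs ! i \<noteq> u)}"

lemma avoiding_walks_from_self: "avoiding_walks_from E u u n = avoiding_walks E u n"
  unfolding avoiding_walks_from_def avoiding_walks_def by simp

lemma avoiding_walks_from_0: "avoiding_walks_from E u x 0 = {[x]}"
  unfolding avoiding_walks_from_def by (auto simp: length_Suc_conv)

lemma avoiding_walks_from_Suc:
  "avoiding_walks_from E u x (Suc n) =
     (#) x ` (\<Union>y \<in> {y. E x y} - {u}. avoiding_walks_from E u y n)"
proof (intro set_eqI iffI)
  fix xs assume "xs \<in> avoiding_walks_from E u x (Suc n)"
  then obtain y ys where xs: "xs = x # y # ys" and "length ys = n"
    and edges: "\<forall>i<Suc n. E (xs ! i) (xs ! Suc i)"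
    and avoid: "\<forall>i. 1 \<le> i \<and> i \<le> Suc n \<longrightarrow> xs ! i \<noteq> u"
    unfolding avoiding_walks_from_def by (auto simp: length_Suc_conv)
  moreover have "E x y" "y \<noteq> u"
    using edges[rule_format, of 0] avoid[rule_format, of 1] xs by auto
  moreover have "y # ys \<in> avoiding_walks_from E u y n"
    unfolding avoiding_walks_from_def
  proof (intro CollectI conjI allI impI)
    fix i
    show "i < n \<Longrightarrow> E ((y # ys) ! i) ((y # ys) ! Suc i)"
      using edges[rule_format, of "Suc i"] xs by simp
    show "1 \<le> i \<and> i \<le> n \<Longrightarrow> (y # ys) ! i \<noteq> u"
      using avoid[rule_format, of "Suc i"] xs by simp
  qed (use \<open>length ys = n\<close> in simp_all)
  ultimately show "xs \<in> (#) x ` (\<Union>y \<in> {y. E x y} - {u}. avoiding_walks_from E u y n)"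
    by blast
next
  fix xs assume "xs \<in> (#) x ` (\<Union>y \<in> {y. E x y} - {u}. avoiding_walks_from E u y n)"
  then obtain y ys where xs: "xs = x # ys" and "E x y" "y \<noteq> u"
    and ys: "ys \<in> avoiding_walks_from E u y n"
    by blast
  then have "ys ! 0 = y" "length ys = Suc n"
    by (simp_all add: avoiding_walks_from_def)
  show "xs \<in> avoiding_walks_from E u x (Suc n)"
    unfolding avoiding_walks_from_def
  proof (intro CollectI conjI allI impI)
    fix i
    show "i < Suc n \<Longrightarrow> E (xs ! i) (xs ! Suc i)"
      using ys \<open>E x y\<close> \<open>ys ! 0 = y\<close> xs
      by (cases i) (simp_all add: avoiding_walks_from_def)
    assume "1 \<le> i \<and> i \<le> Suc n"
    then obtain k where "i = Suc k" "k \<le> n"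
      by (cases i) auto
    then show "xs ! i \<noteq> u"
      using ys \<open>y \<noteq> u\<close> \<open>ys ! 0 = y\<close> xs
      by (cases k) (simp_all add: avoiding_walks_from_def)
  qed (use xs \<open>length ys = Suc n\<close> in simp_all)
qed

lemma finite_avoiding_walks_from:
  assumes "\<And>x. finite {y. E x y}"
  shows "finite (avoiding_walks_from E u x n)"
proof (induction n arbitrary: x)
  case (Suc n)
  then show ?case
    unfolding avoiding_walks_from_Suc using assms by blast
qed (simp add: avoiding_walks_from_0)

lemma walk_weight_Cons:
  "ys \<noteq> [] \<Longrightarrow> walk_weight E (x # ys) = walk_weight E ys / real (degree E x)"
  unfolding walk_weight_def
  by (cases ys) (simp_all add: prod.lessThan_Suc_shift del: prod.lessThan_Suc)

lemma sum_walk_weight_avoiding_walks_from_Suc: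
  assumes fin: "\<And>x. finite {y. E x y}"
  shows "sum (walk_weight E) (avoiding_walks_from E u x (Suc n)) =
     (\<Sum>y \<in> {y. E x y} - {u}. sum (walk_weight E) (avoiding_walks_from E u y n)) / real (degree E x)"
proof -
  have "sum (walk_weight E) (avoiding_walks_from E u x (Suc n))
      = (\<Sum>y \<in> {y. E x y} - {u}. sum (walk_weight E \<circ> (#) x) (avoiding_walks_from E u y n))"
    unfolding avoiding_walks_from_Suc
  proof (subst sum.reindex)
    show "inj_on ((#) x) (\<Union>y \<in> {y. E x y} - {u}. avoiding_walks_from E u y n)"
      by simp
    show "sum (walk_weight E \<circ> (#) x) (\<Union>y \<in> {y. E x y} - {u}. avoiding_walks_from E u y n) =
        (\<Sum>y \<in> {y. E x y} - {u}. sum (walk_weight E \<circ> (#) x) (avoiding_walks_from E u y n))"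
      by (intro sum.UNION_disjoint finite_Diff fin ballI finite_avoiding_walks_from)
         (auto simp: avoiding_walks_from_def)
  qed
  also have "\<dots> = (\<Sum>y \<in> {y. E x y} - {u}.
      sum (walk_weight E) (avoiding_walks_from E u y n) / real (degree E x))"
    by (intro sum.cong refl)
       (auto simp: sum_divide_distrib avoiding_walks_from_def intro!: sum.cong walk_weight_Cons)
  finally show ?thesis by (simp add: sum_divide_distrib)
qed

lemma subharmonic_le_sum_avoiding_walks_from:
  assumes fin: "\<And>x. finite {y. E x y}"
    and le_1: "\<And>x. E\<^sup>*\<^sup>* u x \<Longrightarrow> g x \<le> 1"
    and subharmonic: "\<And>x. E\<^sup>*\<^sup>* u x \<Longrightarrow> g x \<le> (\<Sum>y \<in> {y. E x y} - {u}. g y) / real (degree E x)"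
    and "E\<^sup>*\<^sup>* u x"
  shows "g x \<le> sum (walk_weight E) (avoiding_walks_from E u x n)"
  using \<open>E\<^sup>*\<^sup>* u x\<close>
proof (induction n arbitrary: x)
  case 0
  then show ?case using le_1 by (simp add: avoiding_walks_from_0 walk_weight_def)
next
  case (Suc n)
  have "g x \<le> (\<Sum>y \<in> {y. E x y} - {u}. g y) / real (degree E x)"
    using subharmonic[OF Suc.prems] .
  also have "\<dots> \<le> (\<Sum>y \<in> {y. E x y} - {u}. sum (walk_weight E) (avoiding_walks_from E u y n))
                   / real (degree E x)"
    using Suc.prems
    by (intro divide_right_mono sum_mono Suc.IH) (auto intro: rtranclp.rtrancl_into_rtrancl)
  finally show ?case by (simp add: sum_walk_weight_avoiding_walks_from_Suc[OF fin])
qed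

theorem escape_prob_ge_subharmonic:
  assumes "\<And>x. finite {y. E x y}"
    and "\<And>x. E\<^sup>*\<^sup>* u x \<Longrightarrow> g x \<le> 1"
    and "\<And>x. E\<^sup>*\<^sup>* u x \<Longrightarrow> g x \<le> (\<Sum>y \<in> {y. E x y} - {u}. g y) / real (degree E x)"
  shows "g u \<le> escape_prob E u"
  unfolding escape_prob_def prob_no_return_by_def
  using subharmonic_le_sum_avoiding_walks_from[OF assms rtranclp.rtrancl_refl]
  by (intro cINF_greatest) (simp_all add: avoiding_walks_from_self)

section \<open>Branches of trees\<close>

lemma graphD:
  assumes "graph V E" "E x y"
  shows "x \<in> V" "y \<in> V" "E y x" "x \<noteq> y"
  using assms unfolding graph_def by blast+

lemma tree_neighbours_disconnected:
  assumes "graph V E" "\<not> has_cycle V E" "E x y" "E x z" "y \<noteq> z"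
  shows "\<not> (\<lambda>a b. E a b \<and> a \<noteq> x \<and> b \<noteq> x)\<^sup>*\<^sup>* y z"
proof
  let ?R = "\<lambda>a b. E a b \<and> a \<noteq> x \<and> b \<noteq> x"
  assume "?R\<^sup>*\<^sup>* y z"
  then obtain ys0 where "rtrancl_path ?R y ys0 z"
    unfolding rtranclp_eq_rtrancl_path by blast
  then obtain ys where path: "rtrancl_path ?R y ys z" and "distinct (y # ys)"
    by (rule rtrancl_path_distinct)
  have "ys \<noteq> []"
    using path \<open>y \<noteq> z\<close> by (auto elim: rtrancl_path.cases)
  have ys_avoid: "w \<in> set ys \<Longrightarrow> w \<noteq> x \<and> w \<in> V" for w
    using rtrancl_path_Range[OF path] graphD[OF \<open>graph V E\<close>] by blast
  let ?cycle = "x # y # ys"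
  have "3 \<le> length ?cycle"
    using \<open>ys \<noteq> []\<close> by (cases ys) auto
  moreover have "distinct ?cycle" "set ?cycle \<subseteq> V"
    using \<open>distinct (y # ys)\<close> ys_avoid graphD[OF assms(1,3)] by auto
  moreover have "E (?cycle ! i) (?cycle ! Suc i)" if "Suc i < length ?cycle" for i
    using that assms(3) rtrancl_path_nth[OF path, of "i - 1"] by (cases i) auto
  moreover have "E (last ?cycle) (hd ?cycle)"
    using rtrancl_path_last[OF path \<open>ys \<noteq> []\<close>] graphD(3)[OF assms(1,4)] \<open>ys \<noteq> []\<close> by simp
  ultimately have "has_cycle V E"
    unfolding has_cycle_def by blast
  then show False
    using \<open>\<not> has_cycle V E\<close> by contradiction
qed

lemma branch_edges_reach_root:
  assumes "graph V E" "E u v" "x \<in> branch_vertices V E u v"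
  shows "(branch_edges V E u v)\<^sup>*\<^sup>* u x"
proof -
  let ?R = "\<lambda>x y. E x y \<and> x \<noteq> v \<and> y \<noteq> v"
  have "?R\<^sup>*\<^sup>* u x" "x \<in> V"
    using assms(3) unfolding branch_vertices_def by auto
  then show ?thesis
  proof (induction rule: rtranclp_induct)
    case (step y z)
    then have "y \<in> branch_vertices V E u v" "z \<in> branch_vertices V E u v"
      using graphD[OF assms(1)] unfolding branch_vertices_def
      by (auto intro: rtranclp.rtrancl_into_rtrancl)
    then show ?case
      using step unfolding branch_edges_def
      by (metis (no_types, lifting) graphD(1)[OF assms(1)] rtranclp.rtrancl_into_rtrancl)
  qed simp
qed

lemma is_tree_branch:
  assumes tree: "is_tree V E" and "E u v"
  shows "is_tree (branch_vertices V E u v) (branch_edges V E u v)"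
proof -
  let ?V = "branch_vertices V E u v" and ?E = "branch_edges V E u v"
  have graph: "graph V E" and acyclic: "\<not> has_cycle V E"
    using tree unfolding is_tree_def by auto
  have "graph ?V ?E"
    using graph unfolding graph_def branch_edges_def by blast
  moreover have "u \<in> ?V"
    using graphD[OF graph \<open>E u v\<close>] unfolding branch_vertices_def by simp
  moreover have "connected_graph ?V ?E"
  proof -
    have "symp ?E"
      using graphD(3)[OF graph] unfolding branch_edges_def by (auto intro: sympI)
    then show ?thesis
      unfolding connected_graph_def
      using branch_edges_reach_root[OF graph \<open>E u v\<close>]
      by (metis sympD symp_rtranclp rtranclp_trans)
  qed
  moreover have "\<not> has_cycle ?V ?E"
    using acyclic unfolding has_cycle_def branch_edges_def branch_vertices_def by blast
  ultimately show ?thesis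
    unfolding is_tree_def by blast
qed

lemma branch_neighbours:
  assumes tree: "is_tree V E" and "E u v"
    and x: "x \<in> branch_vertices V E u v" "x \<noteq> u"
  shows "{y. branch_edges V E u v x y} = {y. E x y}"
proof -
  have graph: "graph V E" and acyclic: "\<not> has_cycle V E"
    using tree unfolding is_tree_def by auto
  have reach: "(\<lambda>a b. E a b \<and> a \<noteq> v \<and> b \<noteq> v)\<^sup>*\<^sup>* u x"
    using x(1) unfolding branch_vertices_def by simp
  have "y \<in> branch_vertices V E u v" if "E x y" for y
  proof -
    have "y \<noteq> v"
      using tree_neighbours_disconnected[OF graph acyclic, of v u x] reach x(2) that
        graphD(3)[OF graph] \<open>E u v\<close> by blast
    moreover have "x \<noteq> v"
      using x(1) unfolding branch_vertices_def by simp
    ultimately show ?thesis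
      using reach that graphD(2)[OF graph] unfolding branch_vertices_def
      by (simp add: rtranclp.rtrancl_into_rtrancl)
  qed
  then show ?thesis
    using x(1) unfolding branch_edges_def by auto
qed

lemma branch_neighbours_root:
  assumes "graph V E" "E u v"
  shows "{y. branch_edges V E u v u y} = {y. E u y} - {v}"
  using graphD[OF assms(1)] graphD(4)[OF assms]
  unfolding branch_edges_def branch_vertices_def by (auto intro: r_into_rtranclp)

section \<open>Rooted trees\<close>

locale rooted_tree =
  fixes V :: "'a set" and E :: "'a \<Rightarrow> 'a \<Rightarrow> bool" and r :: 'a
  assumes tree: "is_tree V E" and root_in: "r \<in> V"
begin

lemma graph: "graph V E" and acyclic: "\<not> has_cycle V E"
  using tree unfolding is_tree_def by auto

lemmas edgeD = graphD[OF graph]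

definition dist :: "'a \<Rightarrow> nat" where
  "dist x = (LEAST n. (E ^^ n) r x)"

lemma relpowp_dist:
  assumes "x \<in> V"
  shows "(E ^^ dist x) r x"
proof -
  have "E\<^sup>*\<^sup>* r x"
    using tree root_in assms unfolding is_tree_def connected_graph_def by blast
  then show ?thesis
    unfolding dist_def by (rule LeastI_ex[OF rtranclp_imp_relpowp])
qed

lemma dist_le: "(E ^^ n) r x \<Longrightarrow> dist x \<le> n"
  unfolding dist_def by (rule Least_le)

lemma dist_root: "dist r = 0"
  using dist_le[of 0 r] by simp

lemma dist_eq_0_iff: "x \<in> V \<Longrightarrow> dist x = 0 \<longleftrightarrow> x = r"
  using relpowp_dist[of x] dist_root by auto

lemma dist_edge: "x \<in> V \<Longrightarrow> E x y \<Longrightarrow> dist y \<le> Suc (dist x)"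
  by (rule dist_le[OF relpowp_Suc_I[OF relpowp_dist]])

lemma shortest_walk_avoids:
  assumes "(E ^^ k) r w" "k \<le> dist x" "w \<noteq> x"
  shows "(\<lambda>a b. E a b \<and> a \<noteq> x \<and> b \<noteq> x)\<^sup>*\<^sup>* r w"
  using assms
proof (induction k arbitrary: w)
  case (Suc k)
  then obtain q where q: "(E ^^ k) r q" "E q w"
    by (meson relpowp_Suc_E)
  then have "q \<noteq> x"
    using dist_le[OF q(1)] Suc.prems(2) by auto
  moreover have "(\<lambda>a b. E a b \<and> a \<noteq> x \<and> b \<noteq> x)\<^sup>*\<^sup>* r q"
    using Suc.IH[OF q(1)] Suc.prems(2) \<open>q \<noteq> x\<close> by simp
  ultimately show ?case
    using q(2) Suc.prems(3) by (simp add: rtranclp.rtrancl_into_rtrancl)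
qed simp

text \<open>Two neighbours of x that are not farther from the root than x would close a cycle
  through x with the shortest walks from the root.\<close>
lemma neighbour_closer_unique:
  assumes "x \<in> V" "E y x" "E z x" "dist y \<le> dist x" "dist z \<le> dist x"
  shows "y = z"
proof (rule ccontr)
  let ?R = "\<lambda>a b. E a b \<and> a \<noteq> x \<and> b \<noteq> x"
  assume "y \<noteq> z"
  have "y \<in> V" "y \<noteq> x" "z \<in> V" "z \<noteq> x"
    using edgeD assms(2,3) by auto
  then have ry: "?R\<^sup>*\<^sup>* r y" and rz: "?R\<^sup>*\<^sup>* r z"
    using shortest_walk_avoids[OF relpowp_dist] assms(4,5) by blast+
  have "symp ?R"
    using edgeD(3) by (auto intro: sympI)
  then have "?R\<^sup>*\<^sup>* y z"
    using rtranclp_trans[OF sympD[OF symp_rtranclp ry] rz] by blast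
  then show False
    using tree_neighbours_disconnected[OF graph acyclic edgeD(3)[OF assms(2)]
        edgeD(3)[OF assms(3)] \<open>y \<noteq> z\<close>]
    by contradiction
qed

definition parent :: "'a \<Rightarrow> 'a" where
  "parent x = (SOME w. E w x \<and> dist x = Suc (dist w))"

lemma parent:
  assumes "x \<in> V" "x \<noteq> r"
  shows "E (parent x) x" "dist x = Suc (dist (parent x))" "parent x \<in> V"
proof -
  obtain k where k: "dist x = Suc k"
    using assms dist_eq_0_iff by (cases "dist x") auto
  then obtain w where "(E ^^ k) r w" "E w x"
    using relpowp_dist[OF assms(1)] by (metis relpowp_Suc_E)
  moreover from this have "dist w \<le> k" "dist x \<le> Suc (dist w)"
    using dist_le dist_edge edgeD(1) by blast+
  ultimately have "E w x \<and> dist x = Suc (dist w)"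
    using k by simp
  then have "E (parent x) x \<and> dist x = Suc (dist (parent x))"
    unfolding parent_def by (rule someI)
  then show "E (parent x) x" "dist x = Suc (dist (parent x))" "parent x \<in> V"
    using edgeD by auto
qed

lemma parent_induct [consumes 1, case_names root parent]:
  assumes "x \<in> V" "P r" "\<And>x. x \<in> V \<Longrightarrow> x \<noteq> r \<Longrightarrow> P (parent x) \<Longrightarrow> P x"
  shows "P x"
  using assms(1)
proof (induction "dist x" arbitrary: x)
  case 0
  then show ?case using assms(2) dist_eq_0_iff by simp
next
  case (Suc n)
  then have "x \<noteq> r"
    using dist_root by auto
  then show ?case
    using Suc parent[of x] assms(3) by simp
qed

lemma child:
  assumes "x \<in> V" "E x y" "x \<noteq> r \<Longrightarrow> y \<noteq> parent x"
  shows "y \<noteq> r" "parent y = x"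
proof -
  have "y \<in> V"
    using edgeD assms(2) by blast
  have dist_y: "dist y = Suc (dist x)"
  proof (rule ccontr)
    assume "dist y \<noteq> Suc (dist x)"
    then have "dist y \<le> dist x"
      using dist_edge[OF assms(1,2)] by simp
    show False
    proof (cases "x = r")
      case True
      then show False
        using \<open>dist y \<le> dist x\<close> dist_root dist_eq_0_iff[OF \<open>y \<in> V\<close>] edgeD(4)[OF assms(2)]
        by simp
    next
      case False
      then show False
        using neighbour_closer_unique[OF assms(1) parent(1)[OF assms(1) False]
            edgeD(3)[OF assms(2)]]
          parent(2)[OF assms(1) False] \<open>dist y \<le> dist x\<close> assms(3)
        by simp
    qed
  qed
  then show "y \<noteq> r"
    using dist_root by auto
  then show "parent y = x"
    using neighbour_closer_unique[OF \<open>y \<in> V\<close> parent(1)[OF \<open>y \<in> V\<close>] assms(2)]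
      parent(2)[OF \<open>y \<in> V\<close>] dist_y
    by simp
qed

lemma parent_parent_neq:
  assumes "x \<in> V" "x \<noteq> r" "parent x \<noteq> r"
  shows "parent (parent x) \<noteq> x"
  using parent[OF assms(1,2)] parent(2)[of "parent x"] assms(3) by auto

text \<open>Recursion towards the root; since parent is only given by choice, the recursion is on
  the distance as fuel.\<close>
primrec root_rec_fuel :: "('a \<Rightarrow> 'b \<Rightarrow> 'b) \<Rightarrow> 'b \<Rightarrow> nat \<Rightarrow> 'a \<Rightarrow> 'b" where
  "root_rec_fuel f z 0 x = z"
| "root_rec_fuel f z (Suc n) x = f x (root_rec_fuel f z n (parent x))"

definition root_rec :: "('a \<Rightarrow> 'b \<Rightarrow> 'b) \<Rightarrow> 'b \<Rightarrow> 'a \<Rightarrow> 'b" where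
  "root_rec f z x = root_rec_fuel f z (dist x) x"

lemma root_rec_root: "root_rec f z r = z"
  unfolding root_rec_def dist_root by simp

lemma root_rec_parent:
  "x \<in> V \<Longrightarrow> x \<noteq> r \<Longrightarrow> root_rec f z x = f x (root_rec f z (parent x))"
  unfolding root_rec_def using parent(2) by simp

end

section \<open>Subdivisions\<close>

locale subdivision =
  fixes M :: real and VT :: "'a set" and ET :: "'a \<Rightarrow> 'a \<Rightarrow> bool"
    and VS :: "'b set" and ES :: "'b \<Rightarrow> 'b \<Rightarrow> bool"
    and \<phi> :: "'b \<Rightarrow> 'a" and p :: "'b \<Rightarrow> 'b \<Rightarrow> 'a list"
  assumes graph_S: "graph VS ES" and graph_T: "graph VT ET"
    and inj: "inj_on \<phi> VS" and branch_in: "\<phi> ` VS \<subseteq> VT"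
    and path: "\<And>a b. ES a b \<Longrightarrow>
         2 \<le> length (p a b) \<and> real (length (p a b) - 1) \<le> M \<and>
         hd (p a b) = \<phi> a \<and> last (p a b) = \<phi> b \<and> distinct (p a b) \<and>
         p b a = rev (p a b) \<and> set (p a b) \<subseteq> VT \<and>
         (\<forall>i. Suc i < length (p a b) \<longrightarrow> ET (p a b ! i) (p a b ! Suc i)) \<and>
         set (p a b) \<inter> \<phi> ` VS = {\<phi> a, \<phi> b}"
    and paths_disjoint: "\<And>a b c d. ES a b \<Longrightarrow> ES c d \<Longrightarrow> {a, b} \<noteq> {c, d} \<Longrightarrow>
         set (p a b) \<inter> set (p c d) \<subseteq> \<phi> ` VS"
    and vertices: "VT = \<phi> ` VS \<union> \<Union> {set (p a b) | a b. ES a b}"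
    and edges: "\<And>x y. ET x y \<longleftrightarrow>
         (\<exists>a b i. ES a b \<and> Suc i < length (p a b) \<and> x = p a b ! i \<and> y = p a b ! Suc i)"

lemma bounded_subdivisionE:
  assumes "bounded_subdivision M VT ET VS ES" "graph VS ES" "graph VT ET"
  obtains \<phi> p where "subdivision M VT ET VS ES \<phi> p"
proof -
  obtain \<phi> p where H: "inj_on \<phi> VS \<and> \<phi> ` VS \<subseteq> VT \<and>
      (\<forall>a b. ES a b \<longrightarrow>
         2 \<le> length (p a b) \<and> real (length (p a b) - 1) \<le> M \<and>
         hd (p a b) = \<phi> a \<and> last (p a b) = \<phi> b \<and> distinct (p a b) \<and>
         p b a = rev (p a b) \<and> set (p a b) \<subseteq> VT \<and>
         (\<forall>i. Suc i < length (p a b) \<longrightarrow> ET (p a b ! i) (p a b ! Suc i)) \<and>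
         set (p a b) \<inter> \<phi> ` VS = {\<phi> a, \<phi> b}) \<and>
      (\<forall>a b c d. ES a b \<and> ES c d \<and> {a, b} \<noteq> {c, d} \<longrightarrow>
         set (p a b) \<inter> set (p c d) \<subseteq> \<phi> ` VS) \<and>
      VT = \<phi> ` VS \<union> \<Union> {set (p a b) | a b. ES a b} \<and>
      (\<forall>x y. ET x y \<longleftrightarrow>
         (\<exists>a b i. ES a b \<and> Suc i < length (p a b) \<and> x = p a b ! i \<and> y = p a b ! Suc i))"
    using assms(1) unfolding bounded_subdivision_def by (elim exE)
  have "subdivision M VT ET VS ES \<phi> p"
    using H assms(2,3) unfolding subdivision_def imp_conjL
    by (elim conjE) (intro conjI; assumption)
  then show ?thesis
    by (rule that)
qed

context subdivision
begin

lemma path_nonempty: "ES a b \<Longrightarrow> p a b \<noteq> []"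
  using path by force

lemma
  assumes "ES a b"
  shows path_length: "2 \<le> length (p a b)"
    and path_length_le: "real (length (p a b) - 1) \<le> M"
    and path_distinct: "distinct (p a b)"
    and path_rev: "p b a = rev (p a b)"
    and path_edge: "Suc i < length (p a b) \<Longrightarrow> ET (p a b ! i) (p a b ! Suc i)"
    and path_branch: "set (p a b) \<inter> \<phi> ` VS = {\<phi> a, \<phi> b}"
    and path_first: "p a b ! 0 = \<phi> a"
    and path_last: "p a b ! (length (p a b) - 1) = \<phi> b"
  using path[OF assms] path_nonempty[OF assms] by (auto simp: hd_conv_nth last_conv_nth)

lemma path_nth_eq_iff:
  "ES a b \<Longrightarrow> i < length (p a b) \<Longrightarrow> j < length (p a b) \<Longrightarrow> p a b ! i = p a b ! j \<longleftrightarrow> i = j"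
  by (simp add: path_distinct nth_eq_iff_index_eq)

lemma one_le_M: "ES a b \<Longrightarrow> 1 \<le> M"
  using path_length path_length_le by force

lemma path_second_branch:
  assumes "ES a b" "p a b ! 1 \<in> \<phi> ` VS"
  shows "p a b ! 1 = \<phi> b"
proof -
  have "p a b ! 1 \<in> set (p a b)"
    using path_length[OF assms(1)] by simp
  then have "p a b ! 1 \<in> {\<phi> a, \<phi> b}"
    using assms path_branch[OF assms(1)] by blast
  moreover have "p a b ! 1 \<noteq> \<phi> a"
    using path_nth_eq_iff[OF assms(1), of 1 0] path_first[OF assms(1)] path_length[OF assms(1)]
      path_nonempty[OF assms(1)] by simp
  ultimately show ?thesis
    by blast
qed

lemma interior_not_branch:
  assumes "ES a b" "0 < i" "Suc i < length (p a b)"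
  shows "p a b ! i \<notin> \<phi> ` VS"
proof
  assume "p a b ! i \<in> \<phi> ` VS"
  then have "p a b ! i \<in> {p a b ! 0, p a b ! (length (p a b) - 1)}"
    using path_branch[OF assms(1)] path_first[OF assms(1)] path_last[OF assms(1)] assms(3)
    by (metis Int_iff Suc_lessD nth_mem)
  then show False
    using path_nth_eq_iff[OF assms(1), of i 0]
      path_nth_eq_iff[OF assms(1), of i "length (p a b) - 1"]
      path_nonempty[OF assms(1)] assms(2,3) by auto
qed

lemma interior_path_unique:
  assumes "ES a b" "ES c d" "x \<in> set (p a b)" "x \<in> set (p c d)" "x \<notin> \<phi> ` VS"
  shows "p c d = p a b \<or> p c d = rev (p a b)"
proof -
  have "{a, b} = {c, d}"
    using paths_disjoint[OF assms(1,2)] assms(3-5) by blast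
  then show ?thesis
    using path_rev[OF assms(1)] by (auto simp: doubleton_eq_iff)
qed

lemma interior_neighbours:
  assumes ab: "ES a b" and i: "0 < i" "Suc i < length (p a b)"
  shows "{y. ET (p a b ! i) y} = {p a b ! (i - 1), p a b ! Suc i}"
proof (intro set_eqI iffI)
  let ?q = "p a b"
  fix y assume "y \<in> {y. ET (?q ! i) y}"
  then obtain c d k where cd: "ES c d" "Suc k < length (p c d)" "?q ! i = p c d ! k"
    "y = p c d ! Suc k"
    using edges by auto
  have "?q ! i \<in> set (p c d)"
    using cd by (metis Suc_lessD nth_mem)
  then have "p c d = ?q \<or> p c d = rev ?q"
    using interior_path_unique[OF ab cd(1) _ _ interior_not_branch[OF ab i]] i by simp
  then show "y \<in> {?q ! (i - 1), ?q ! Suc i}"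
  proof
    assume "p c d = ?q"
    then have "k = i"
      using cd i path_nth_eq_iff[OF ab, of k i] by simp
    then show ?thesis
      using cd \<open>p c d = ?q\<close> by simp
  next
    assume rev: "p c d = rev ?q"
    then have "?q ! i = ?q ! (length ?q - Suc k)"
      using cd by (simp add: rev_nth)
    then have "i = length ?q - Suc k"
      using cd rev i path_nth_eq_iff[OF ab, of i "length ?q - Suc k"] by simp
    then show ?thesis
      using cd rev by (simp add: rev_nth Suc_diff_Suc)
  qed
next
  fix y assume "y \<in> {p a b ! (i - 1), p a b ! Suc i}"
  moreover have "ET (p a b ! (i - 1)) (p a b ! i)"
    using path_edge[OF ab, of "i - 1"] i by simp
  then have "ET (p a b ! i) (p a b ! (i - 1))"
    by (rule graphD(3)[OF graph_T])
  moreover have "ET (p a b ! i) (p a b ! Suc i)"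
    using path_edge[OF ab, of i] i by simp
  ultimately show "y \<in> {y. ET (p a b ! i) y}"
    by blast
qed

lemma non_branch_interior:
  assumes "x \<in> VT" "x \<notin> \<phi> ` VS"
  obtains a b i where "ES a b" "0 < i" "Suc i < length (p a b)" "x = p a b ! i"
proof -
  obtain a b where ab: "ES a b" "x \<in> set (p a b)"
    using assms vertices by blast
  then obtain i where i: "i < length (p a b)" "x = p a b ! i"
    by (metis in_set_conv_nth)
  then have "i \<noteq> 0" "i \<noteq> length (p a b) - 1"
    using assms(2) path_first[OF ab(1)] path_last[OF ab(1)] graphD(1)[OF graph_S ab(1)]
      graphD(2)[OF graph_S ab(1)] by auto
  then show ?thesis
    using that ab i by simp
qed

lemma interior_neighbour_oriented:
  assumes ab: "ES a b" and i: "0 < i" "Suc i < length (p a b)" and "ET (p a b ! i) w"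
  obtains c d j where "ES c d" "0 < j" "Suc j < length (p c d)"
    "p c d ! j = p a b ! i" "p c d ! (j - 1) = w"
proof -
  have "w = p a b ! (i - 1) \<or> w = p a b ! Suc i"
    using interior_neighbours[OF ab i] assms(4) by auto
  then show ?thesis
  proof
    assume "w = p a b ! (i - 1)"
    then show ?thesis
      using that ab i by blast
  next
    assume w: "w = p a b ! Suc i"
    let ?j = "length (p a b) - Suc i"
    have "ES b a"
      using graphD(3)[OF graph_S ab] .
    moreover have "0 < ?j" "Suc ?j < length (p b a)"
      using i path_rev[OF ab] by auto
    moreover have "p b a ! ?j = p a b ! i" "p b a ! (?j - 1) = w"
      using i path_rev[OF ab] w by (simp_all add: rev_nth Suc_diff_Suc)
    ultimately show ?thesis
      using that by blast
  qed
qed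

lemma card_neighbours_non_branch:
  assumes "x \<in> VT" "x \<notin> \<phi> ` VS"
  shows "card {y. ET x y} = 2"
proof -
  obtain a b i where ab: "ES a b" "0 < i" "Suc i < length (p a b)" "x = p a b ! i"
    using non_branch_interior[OF assms] .
  then have "p a b ! (i - 1) \<noteq> p a b ! Suc i"
    using path_nth_eq_iff[OF ab(1), of "i - 1" "Suc i"] by simp
  then show ?thesis
    using interior_neighbours[OF ab(1-3)] ab(4) by simp
qed

lemma inj_on_path_second:
  "inj_on (\<lambda>b. p a b ! 1) {b. ES a b}"
proof (rule inj_onI, rule ccontr)
  fix b c assume "b \<in> {b. ES a b}" "c \<in> {b. ES a b}" "p a b ! 1 = p a c ! 1" "b \<noteq> c"
  then have ab: "ES a b" and ac: "ES a c" and "{a, b} \<noteq> {a, c}"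
    by (auto simp: doubleton_eq_iff)
  moreover have "p a b ! 1 \<in> set (p a b)" "p a c ! 1 \<in> set (p a c)"
    using path_length[OF ab] path_length[OF ac] by simp_all
  then have "p a b ! 1 \<in> set (p a b) \<inter> set (p a c)"
    using \<open>p a b ! 1 = p a c ! 1\<close> by simp
  ultimately have "p a b ! 1 \<in> \<phi> ` VS"
    using paths_disjoint[OF ab ac] by blast
  then have "\<phi> b = \<phi> c"
    using path_second_branch[OF ab] path_second_branch[OF ac] \<open>p a b ! 1 = p a c ! 1\<close>
    by simp
  then show False
    using inj \<open>b \<noteq> c\<close> graphD(2)[OF graph_S ab] graphD(2)[OF graph_S ac]
    by (meson inj_on_contraD)
qed

lemma card_neighbours_branch:
  assumes "locally_finite VT ET" "min_degree_ge3 VS ES" "a \<in> VS"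
  shows "3 \<le> card {y. ET (\<phi> a) y}"
proof -
  let ?second = "\<lambda>b. p a b ! 1"
  have fin: "finite {y. ET (\<phi> a) y}"
    using assms(1,3) branch_in unfolding locally_finite_def by blast
  have sub: "?second ` {b. ES a b} \<subseteq> {y. ET (\<phi> a) y}"
  proof clarify
    fix b assume "ES a b"
    then show "ET (\<phi> a) (p a b ! 1)"
      using path_edge[of a b 0] path_length[of a b] path_first[of a b] by simp
  qed
  then have "finite {b. ES a b}"
    using finite_subset[OF sub fin] finite_imageD inj_on_path_second by blast
  then have "3 \<le> card {b. ES a b}"
    using assms(2,3) unfolding min_degree_ge3_def by blast
  also have "\<dots> = card (?second ` {b. ES a b})"
    using inj_on_path_second by (simp add: card_image)
  also have "\<dots> \<le> card {y. ET (\<phi> a) y}"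
    using card_mono[OF fin sub] .
  finally show ?thesis .
qed

lemma card_neighbours_ge_2:
  assumes "locally_finite VT ET" "min_degree_ge3 VS ES" "x \<in> VT"
  shows "2 \<le> card {y. ET x y}"
proof (cases "x \<in> \<phi> ` VS")
  case True
  then show ?thesis
    using card_neighbours_branch[OF assms(1,2)] by fastforce
qed (use card_neighbours_non_branch[OF assms(3)] in simp)

end

section \<open>A bounded subharmonic potential on a branch\<close>

locale subdivided_branch = subdivision +
  fixes u v :: 'a
  assumes tree_T: "is_tree VT ET" and locally_finite: "locally_finite VT ET"
    and min_degree: "min_degree_ge3 VS ES" and edge_uv: "ET u v"
begin

abbreviation "B \<equiv> branch_edges VT ET u v"
abbreviation "BV \<equiv> branch_vertices VT ET u v"

lemma root_in_branch: "u \<in> BV"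
  using graphD[OF graph_T edge_uv] unfolding branch_vertices_def by simp

sublocale branch: rooted_tree BV B u
  using is_tree_branch[OF tree_T edge_uv] root_in_branch by unfold_locales

lemma branch_subset: "x \<in> BV \<Longrightarrow> x \<in> VT"
  unfolding branch_vertices_def by simp

lemma M_ge_1: "1 \<le> M"
  using edge_uv edges one_le_M by blast

lemma edge_to_parent:
  assumes "x \<in> BV" "x \<noteq> u"
  shows "ET x (branch.parent x)"
proof -
  have "ET (branch.parent x) x"
    using branch.parent(1)[OF assms] unfolding branch_edges_def by simp
  then show ?thesis
    by (rule graphD(3)[OF graph_T])
qed

definition slope :: "'a \<Rightarrow> real" where
  "slope = branch.root_rec (\<lambda>x s. if x \<in> \<phi> ` VS then s / 2 else s) (1 / (2 * M))"

definition run_length :: "'a \<Rightarrow> nat" where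
  "run_length = branch.root_rec (\<lambda>x k. if x \<in> \<phi> ` VS then 0 else Suc k) 0"

definition potential :: "'a \<Rightarrow> real" where
  "potential = branch.root_rec (\<lambda>x h. h + slope (branch.parent x)) 0"

lemma
  shows slope_root: "slope u = 1 / (2 * M)"
    and run_length_root: "run_length u = 0"
    and potential_root: "potential u = 0"
  unfolding slope_def run_length_def potential_def by (simp_all add: branch.root_rec_root)

lemma
  assumes "x \<in> BV" "x \<noteq> u"
  shows slope_parent:
      "slope x = (if x \<in> \<phi> ` VS then slope (branch.parent x) / 2 else slope (branch.parent x))"
    and run_length_parent:
      "run_length x = (if x \<in> \<phi> ` VS then 0 else Suc (run_length (branch.parent x)))"
    and potential_parent: "potential x = potential (branch.parent x) + slope (branch.parent x)"
  unfolding slope_def run_length_def potential_def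
  by (simp_all add: branch.root_rec_parent[OF assms])

lemma run_length_eq_0:
  assumes "x \<in> BV" "x = u \<or> x \<in> \<phi> ` VS"
  shows "run_length x = 0"
  using assms run_length_root run_length_parent[OF assms(1)] by (cases "x = u") simp_all

lemma slope_pos: "x \<in> BV \<Longrightarrow> 0 < slope x"
proof (induction rule: branch.parent_induct)
  case root
  then show ?case using slope_root M_ge_1 by simp
next
  case (parent x)
  then show ?case using slope_parent[of x] by simp
qed

lemma run_length_le_position:
  assumes "ES a b" "0 < j" "Suc j < length (p a b)" "p a b ! j \<in> BV"
    "branch.parent (p a b ! j) = p a b ! (j - 1)"
  shows "run_length (p a b ! j) \<le> j"
  using assms(2-5)
proof (induction j)
  case (Suc j)
  let ?x = "p a b ! Suc j" and ?w = "p a b ! j"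
  show ?case
  proof (cases "?x = u")
    case False
    then have run_x: "run_length ?x = Suc (run_length ?w)"
      using run_length_parent[OF Suc.prems(3) False] interior_not_branch[OF assms(1) Suc.prems(1,2)]
        Suc.prems(4) by simp
    have w_in: "?w \<in> BV"
      using branch.parent(3)[OF Suc.prems(3) False] Suc.prems(4) by simp
    have "run_length ?w \<le> j"
    proof (cases "?w = u \<or> ?w \<in> \<phi> ` VS")
      case True
      then show ?thesis using run_length_eq_0[OF w_in] by simp
    next
      case False
      then have "0 < j"
        using path_first[OF assms(1)] graphD(1)[OF graph_S assms(1)] by (cases j) auto
      have "branch.parent ?w \<noteq> ?x"
        using branch.parent_parent_neq[OF Suc.prems(3) \<open>?x \<noteq> u\<close>] Suc.prems(4) False by simp
      moreover have "ET ?w (branch.parent ?w)"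
        using edge_to_parent w_in False by blast
      ultimately have "branch.parent ?w = p a b ! (j - 1)"
        using interior_neighbours[OF assms(1) \<open>0 < j\<close>] Suc.prems(2) by auto
      then show ?thesis
        using Suc.IH[OF \<open>0 < j\<close> _ w_in] Suc.prems(2) by simp
    qed
    then show ?thesis
      using run_x by simp
  qed (simp add: run_length_root)
qed simp

lemma run_length_bound:
  assumes "x \<in> BV"
  shows "real (run_length x) + 1 \<le> M"
proof (cases "x = u \<or> x \<in> \<phi> ` VS")
  case True
  then show ?thesis using run_length_eq_0[OF assms] M_ge_1 by simp
next
  case False
  then have "ET x (branch.parent x)"
    using edge_to_parent assms by blast
  obtain a b i where "ES a b" "0 < i" "Suc i < length (p a b)" "x = p a b ! i"
    using non_branch_interior[OF branch_subset[OF assms]] False by blast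
  then obtain c d j where cd: "ES c d" "0 < j" "Suc j < length (p c d)"
    "p c d ! j = x" "p c d ! (j - 1) = branch.parent x"
    using interior_neighbour_oriented \<open>ET x (branch.parent x)\<close> by metis
  then have "run_length x \<le> j"
    using run_length_le_position[OF cd(1-3)] assms by simp
  then show ?thesis
    using path_length_le[OF cd(1)] cd(3) by linarith
qed

text \<open>The invariant behind the bound 1: the current run has at most M - run length steps left,
  and the halved slopes of all later runs add up to at most M times the current slope.\<close>
lemma potential_budget:
  "x \<in> BV \<Longrightarrow> potential x + (2 * M - real (run_length x)) * slope x \<le> 1"
proof (induction rule: branch.parent_induct)
  case root
  then show ?case using slope_root run_length_root potential_root M_ge_1 by simp
next
  case (parent x)
  let ?w = "branch.parent x"
  have "real (run_length ?w) + 1 \<le> M" "0 < slope ?w"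
    using run_length_bound slope_pos branch.parent(3)[OF parent.hyps] by auto
  then have budget_w: "real (run_length ?w) * slope ?w + slope ?w \<le> M * slope ?w"
    using mult_right_mono[of "real (run_length ?w) + 1" M "slope ?w"] by (simp add: distrib_right)
  have expand_w: "(2 * M - real (run_length ?w)) * slope ?w
      = 2 * (M * slope ?w) - real (run_length ?w) * slope ?w"
    by (simp add: left_diff_distrib)
  have "potential x + (2 * M - real (run_length x)) * slope x
      \<le> potential ?w + (2 * M - real (run_length ?w)) * slope ?w"
  proof (cases "x \<in> \<phi> ` VS")
    case True
    then have "slope x = slope ?w / 2" "run_length x = 0"
      using slope_parent[OF parent.hyps] run_length_parent[OF parent.hyps] by simp_all
    then have "(2 * M - real (run_length x)) * slope x = M * slope ?w"
      by simp
    then show ?thesis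
      using potential_parent[OF parent.hyps] budget_w expand_w by linarith
  next
    case False
    then have "slope x = slope ?w" "run_length x = Suc (run_length ?w)"
      using slope_parent[OF parent.hyps] run_length_parent[OF parent.hyps] by simp_all
    then have "(2 * M - real (run_length x)) * slope x
        = (2 * M - real (run_length ?w)) * slope ?w - slope ?w"
      by (simp add: algebra_simps)
    then show ?thesis
      using potential_parent[OF parent.hyps] by linarith
  qed
  then show ?case
    using parent.IH by linarith
qed

lemma potential_le_1:
  assumes "x \<in> BV"
  shows "potential x \<le> 1"
proof -
  have "0 \<le> (2 * M - real (run_length x)) * slope x"
    using run_length_bound[OF assms] slope_pos[OF assms] M_ge_1 by simp
  then show ?thesis
    using potential_budget[OF assms] by linarith
qed

lemma potential_child:
  assumes "x \<in> BV" "B x y" "x \<noteq> u \<Longrightarrow> y \<noteq> branch.parent x"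
  shows "potential y = potential x + slope x"
proof -
  have "y \<in> BV"
    using assms(2) unfolding branch_edges_def by simp
  then show ?thesis
    using potential_parent branch.child[OF assms] by auto
qed

lemma finite_branch_neighbours: "finite {y. B x y}"
proof (cases "x \<in> BV")
  case True
  then have "finite {y. ET x y}"
    using locally_finite branch_subset unfolding locally_finite_def by blast
  then show ?thesis
    by (rule rev_finite_subset) (auto simp: branch_edges_def)
qed (simp add: branch_edges_def)

lemma reachable_in_branch: "B\<^sup>*\<^sup>* u x \<Longrightarrow> x \<in> BV"
  by (induction rule: rtranclp_induct) (simp_all add: root_in_branch branch_edges_def)

lemma branch_degree_ge_2: "x \<in> BV \<Longrightarrow> x \<noteq> u \<Longrightarrow> 2 \<le> degree B x"
  using card_neighbours_ge_2[OF locally_finite min_degree branch_subset]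
    branch_neighbours[OF tree_T edge_uv] unfolding degree_def by simp

lemma slope_parent_le:
  assumes x: "x \<in> BV" "x \<noteq> u"
  shows "slope (branch.parent x) \<le> (real (degree B x) - 1) * slope x"
proof (cases "x \<in> \<phi> ` VS")
  case True
  then have "3 \<le> degree B x"
    using card_neighbours_branch[OF locally_finite min_degree]
      branch_neighbours[OF tree_T edge_uv x]
    unfolding degree_def by auto
  then have "2 * slope x \<le> (real (degree B x) - 1) * slope x"
    using slope_pos[OF x(1)] by (intro mult_right_mono) auto
  moreover have "slope (branch.parent x) = 2 * slope x"
    using True slope_parent[OF x] by simp
  ultimately show ?thesis
    by linarith
next
  case False
  then show ?thesis
    using branch_degree_ge_2[OF x] slope_parent[OF x] slope_pos[OF x(1)]
    by (simp add: mult_right_mono)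
qed

lemma potential_subharmonic:
  assumes x: "x \<in> BV" "x \<noteq> u"
  shows "potential x \<le> (\<Sum>y \<in> {y. B x y} - {u}. potential y) / real (degree B x)"
proof -
  let ?N = "{y. B x y}" and ?w = "branch.parent x" and ?k = "real (degree B x)"
  have "?w \<in> ?N"
    using branch.edgeD(3)[OF branch.parent(1)[OF x]] by simp
  have "potential y = potential x + slope x" if "y \<in> ?N - {?w}" for y
    using potential_child[OF x(1)] that by blast
  then have "(\<Sum>y \<in> ?N - {?w}. potential y) = (?k - 1) * (potential x + slope x)"
    using \<open>?w \<in> ?N\<close> finite_branch_neighbours branch_degree_ge_2[OF x]
    unfolding degree_def by (simp add: of_nat_diff)
  moreover have "(\<Sum>y \<in> ?N - {u}. potential y) = (\<Sum>y \<in> ?N. potential y)"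
    using finite_branch_neighbours potential_root by (simp add: sum_diff1)
  moreover have "(\<Sum>y \<in> ?N. potential y) = potential ?w + (\<Sum>y \<in> ?N - {?w}. potential y)"
    using sum.remove[OF finite_branch_neighbours \<open>?w \<in> ?N\<close>] .
  moreover have "potential ?w = potential x - slope ?w"
    using potential_parent[OF x] by simp
  ultimately have "?k * potential x \<le> (\<Sum>y \<in> ?N - {u}. potential y)"
    using slope_parent_le[OF x] by (simp add: algebra_simps)
  then show ?thesis
    using branch_degree_ge_2[OF x] by (simp add: pos_le_divide_eq mult.commute)
qed

lemma potential_subharmonic_root:
  "1 / (2 * M) \<le> (\<Sum>y \<in> {y. B u y} - {u}. potential y) / real (degree B u)"
proof -
  let ?N = "{y. B u y}"
  have "?N = {y. ET u y} - {v}"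
    using branch_neighbours_root[OF graph_T edge_uv] .
  moreover have "2 \<le> card {y. ET u y}" "finite {y. ET u y}"
    using card_neighbours_ge_2[OF locally_finite min_degree] locally_finite
      graphD(1)[OF graph_T edge_uv] unfolding locally_finite_def by auto
  ultimately have "0 < card ?N"
    by (simp add: card_Diff_singleton_if)
  have "u \<notin> ?N"
    using branch.edgeD(4) by blast
  moreover have "potential y = 1 / (2 * M)" if "y \<in> ?N" for y
    using potential_child[OF root_in_branch] that potential_root slope_root by simp
  ultimately have "(\<Sum>y \<in> ?N - {u}. potential y) = real (card ?N) * (1 / (2 * M))"
    by simp
  then show ?thesis
    using \<open>0 < card ?N\<close> unfolding degree_def by simp
qed

text \<open>The sums over neighbours y \<noteq> u treat u as having potential 0; the value at u itself only
  has to be the average over its children, which all have potential 1/(2M).\<close>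
lemma escape_prob_ge: "1 / (2 * M) \<le> escape_prob B u"
proof -
  let ?g = "potential(u := 1 / (2 * M))"
  have "?g x \<le> 1" if "B\<^sup>*\<^sup>* u x" for x
    using potential_le_1[OF reachable_in_branch[OF that]] M_ge_1 by simp
  moreover have "?g x \<le> (\<Sum>y \<in> {y. B x y} - {u}. ?g y) / real (degree B x)" if "B\<^sup>*\<^sup>* u x" for x
  proof -
    have "(\<Sum>y \<in> {y. B x y} - {u}. ?g y) = (\<Sum>y \<in> {y. B x y} - {u}. potential y)"
      by (rule sum.cong) auto
    then show ?thesis
      using potential_subharmonic[OF reachable_in_branch[OF that]] potential_subharmonic_root
      by (cases "x = u") simp_all
  qed
  ultimately have "?g u \<le> escape_prob B u"
    by (rule escape_prob_ge_subharmonic[OF finite_branch_neighbours])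
  then show ?thesis
    by simp
qed

end

lemma escape_prob_branch_of_bounded_subdivision:
  assumes "is_tree VT ET" "locally_finite VT ET" "is_tree VS ES" "min_degree_ge3 VS ES"
    and "bounded_subdivision M VT ET VS ES" "ET u v"
  shows "1 / (2 * M) \<le> escape_prob (branch_edges VT ET u v) u"
proof -
  obtain \<phi> p where "subdivision M VT ET VS ES \<phi> p"
    using bounded_subdivisionE[OF assms(5)] assms(1,3) unfolding is_tree_def by blast
  then interpret subdivided_branch M VT ET VS ES \<phi> p u v
    using assms by (simp add: subdivided_branch_def subdivided_branch_axioms_def)
  show ?thesis
    by (rule escape_prob_ge)
qed

theorem mainTheorem9:
  fixes M :: real
  assumes "M > 0"
  shows "\<exists>\<alpha>>0. \<forall>(VT::nat set) ET u v.
    is_tree VT ET \<and> locally_finite VT ET \<and>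
    (\<exists>(VS::nat set) ES. is_tree VS ES \<and> min_degree_ge3 VS ES \<and>
        bounded_subdivision M VT ET VS ES) \<and>
    ET u v
    \<longrightarrow> \<alpha> \<le> escape_prob (branch_edges VT ET u v) u"
  using assms escape_prob_branch_of_bounded_subdivision
  by (intro exI[of _ "1 / (2 * M)"]) auto

end
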